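(* Let $\alpha>2$, $P>0$ and $N\ge 0$. Let $V'$ be a finite set of points (nodes) in the Euclidean plane and let $v$ be a point with $v\notin V'$. Suppose that there are reals $\rho_1,\rho_2$ such that (1) any two distinct nodes of $V'$ are at Euclidean distance at least $\rho_1$ from each other, (2) every node of $V'$ is at distance at least $\rho_2$ from $v$, and (3) $\rho_2 > \rho_1/2 > 0$. Then $$SP(V',v) \;<\; \frac{36(\alpha-1)}{\alpha-2}\,\frac{\rho_2^2}{\rho_1^2}\,\frac{P}{\rho_2^{\alpha}} + N .$$
   Context: Physical (SINR) model in the Euclidean plane: every transmitting node uses the same power $P$, the path-loss exponent is $\alpha>2$, and $N\ge 0$ is the background noise. For a set $V'$ of nodes that transmit simultaneously and a node $v\notin V'$, the sensed power strength at $v$ is $SP(V',v)=\sum_{u\in V'} \frac{P}{d(u,v)^{\alpha}} + N$, where $d(u,v)$ is the Euclidean distance between $u$ and $v$. *)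

theory Defs
  imports "HOL-Analysis.Analysis"
begin

text \<open>Sensed power strength at v from the simultaneously transmitting set V'
  (SINR model, uniform power P, path-loss exponent alpha, noise N).\<close>
definition SP :: "real \<Rightarrow> real \<Rightarrow> real \<Rightarrow> (real^2) set \<Rightarrow> real^2 \<Rightarrow> real" where
  "SP P alpha N V' v = (\<Sum>u\<in>V'. P / dist u v powr alpha) + N"

end

theory Submission
  imports Defs
begin

text \<open>Sort the transmitters into dyadic shells around \<open>v\<close>: shell \<open>j\<close> holds the nodes at
  distance in \<open>[rho2 * 2^j, rho2 * 2^(j+1))\<close>.  The open balls of radius \<open>rho1/2\<close> around the
  nodes of one shell are disjoint and lie in a slightly widened annulus, so comparing areas
  bounds the number of nodes in shell \<open>j\<close> by \<open>(12 * 4^j + 24 * 2^j) * (rho2/rho1)^2\<close>, while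
  each of them contributes at most \<open>P / rho2^alpha * 2^(-alpha j)\<close>.  Since \<open>alpha > 2\<close> the
  resulting geometric series converge, and \<open>2^(alpha-2) \<ge> 1 + (alpha-2) ln 2\<close> bounds their
  sum by \<open>36 (alpha-1)/(alpha-2)\<close>.\<close>

lemma disjoint_family_on_half_balls:
  fixes S :: "'a::metric_space set"
  assumes "\<forall>u\<in>S. \<forall>w\<in>S. u \<noteq> w \<longrightarrow> dist u w \<ge> s"
  shows "disjoint_family_on (\<lambda>u. ball u (s/2)) S"
  unfolding disjoint_family_on_def
proof (intro ballI impI)
  fix u w assume "u \<in> S" "w \<in> S" "u \<noteq> w"
  with assms have sep: "dist u w \<ge> s" by auto
  show "ball u (s/2) \<inter> ball w (s/2) = {}"
  proof (rule ccontr)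
    assume "ball u (s/2) \<inter> ball w (s/2) \<noteq> {}"
    then obtain z where "dist u z < s/2" "dist w z < s/2" by auto
    with dist_triangle2[of u w z] sep show False by linarith
  qed
qed

lemma card_separated_in_annulus_le:
  fixes S :: "'a::euclidean_space set"
  assumes fin: "finite S" and s: "s > 0"
    and sep: "\<forall>u\<in>S. \<forall>w\<in>S. u \<noteq> w \<longrightarrow> dist u w \<ge> s"
    and annulus: "\<forall>u\<in>S. a \<le> dist u v \<and> dist u v < b"
    and "s/2 \<le> a" "a \<le> b"
  shows "real (card S) * (s/2) ^ DIM('a) \<le> (b + s/2) ^ DIM('a) - (a - s/2) ^ DIM('a)"
proof -
  define V where "V = unit_ball_vol (DIM('a))"
  define A where "A = ball v (b + s/2) - cball v (a - s/2)"
  have "V > 0" unfolding V_def by simp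
  have ball_finite: "emeasure lborel (ball c r) \<noteq> \<infinity>" for c :: 'a and r
    by (cases "r \<ge> 0") (simp_all add: emeasure_ball ball_empty)
  have balls_in_A: "(\<Union>u\<in>S. ball u (s/2)) \<subseteq> A"
  proof
    fix z assume "z \<in> (\<Union>u\<in>S. ball u (s/2))"
    then obtain u where u: "u \<in> S" "dist u z < s/2" by auto
    with annulus dist_triangle[of u v z] dist_triangle[of z v u]
    show "z \<in> A" unfolding A_def by (auto simp: dist_commute)
  qed
  have "measure lborel (\<Union>u\<in>S. ball u (s/2)) = (\<Sum>u\<in>S. measure lborel (ball u (s/2)))"
    using fin disjoint_family_on_half_balls[OF sep] ball_finite
    by (intro measure_finite_Union) auto
  also have "\<dots> = V * (real (card S) * (s/2) ^ DIM('a))"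
    using s by (simp add: content_ball V_def)
  finally have balls: "measure lborel (\<Union>u\<in>S. ball u (s/2)) = V * (real (card S) * (s/2) ^ DIM('a))" .
  have "measure lborel A = measure lborel (ball v (b + s/2)) - measure lborel (cball v (a - s/2))"
    unfolding A_def using assms ball_finite by (intro measure_Diff) auto
  also have "\<dots> = V * ((b + s/2) ^ DIM('a) - (a - s/2) ^ DIM('a))"
    using assms by (simp add: content_ball content_cball V_def algebra_simps)
  finally have annulus_measure: "measure lborel A = V * ((b + s/2) ^ DIM('a) - (a - s/2) ^ DIM('a))" .
  have "A \<in> fmeasurable lborel"
    using ball_finite[of v "b + s/2"] emeasure_mono[of A "ball v (b + s/2)" lborel]
    unfolding fmeasurable_def A_def by (auto simp: top.not_eq_extremum)
  with balls_in_A fin have "measure lborel (\<Union>u\<in>S. ball u (s/2)) \<le> measure lborel A"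
    by (intro measure_mono_fmeasurable) auto
  with balls annulus_measure \<open>V > 0\<close> show ?thesis by simp
qed

definition dyadic_shell :: "real \<Rightarrow> real \<Rightarrow> nat" where
  "dyadic_shell r d = nat \<lfloor>log 2 (d / r)\<rfloor>"

lemma dyadic_shell_bounds:
  assumes "r > 0" "r \<le> d"
  shows "r * 2 ^ dyadic_shell r d \<le> d \<and> d < r * 2 ^ Suc (dyadic_shell r d)"
proof -
  define L where "L = log 2 (d / r)"
  have "L \<ge> 0" unfolding L_def using assms by simp
  then have k: "real (dyadic_shell r d) = of_int \<lfloor>L\<rfloor>"
    unfolding dyadic_shell_def L_def[symmetric] by simp
  have L: "2 powr L = d / r" unfolding L_def using assms by simp
  have "2 ^ dyadic_shell r d = 2 powr real (dyadic_shell r d)" by (simp add: powr_realpow)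
  also have "\<dots> \<le> d / r" using k L by (metis of_int_floor_le powr_mono one_le_numeral)
  finally have lower: "2 ^ dyadic_shell r d \<le> d / r" .
  have "d / r < 2 powr real (Suc (dyadic_shell r d))"
    unfolding L[symmetric] using k by (intro powr_less_mono) linarith+
  also have "\<dots> = 2 ^ Suc (dyadic_shell r d)" by (rule powr_realpow) simp
  finally have upper: "d / r < 2 ^ Suc (dyadic_shell r d)" .
  from lower upper assms show ?thesis by (simp add: field_simps)
qed

lemma card_dyadic_shell_le:
  fixes V :: "(real^2) set" and v :: "real^2"
  assumes "finite V" and s: "s > 0" and r: "s/2 < r"
    and sep: "\<forall>u\<in>V. \<forall>w\<in>V. u \<noteq> w \<longrightarrow> dist u w \<ge> s"
    and far: "\<forall>u\<in>V. dist u v \<ge> r"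
  shows "real (card {u\<in>V. dyadic_shell r (dist u v) = j}) \<le> (12 * 4^j + 24 * 2^j) * (r/s)^2"
proof -
  let ?S = "{u\<in>V. dyadic_shell r (dist u v) = j}"
  let ?n = "real (card ?S)"
  have "?n * (s/2) ^ DIM(real^2) \<le> (r * 2^Suc j + s/2) ^ DIM(real^2) - (r * 2^j - s/2) ^ DIM(real^2)"
  proof (rule card_separated_in_annulus_le)
    show "\<forall>u\<in>?S. r * 2^j \<le> dist u v \<and> dist u v < r * 2^Suc j"
      using far dyadic_shell_bounds[of r] s r by auto
    have "r \<le> r * 2^j" using s r by simp
    then show "s/2 \<le> r * 2^j" using r by linarith
  qed (use assms in auto)
  also have "\<dots> = 3 * 4^j * r^2 + 3 * 2^j * r * s"
    by (simp add: power2_eq_square algebra_simps flip: power_mult_distrib)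
  finally have "?n \<le> 12 * 4^j * (r/s)^2 + 12 * 2^j * (r/s)"
    using s by (simp add: field_simps power2_eq_square)
  also have "12 * 2^j * (r/s) \<le> 24 * 2^j * (r/s)^2"
    using s r by (simp add: power2_eq_square field_simps)
  finally show ?thesis by (simp add: algebra_simps)
qed

lemma path_loss_le_dyadic:
  fixes r d alpha P :: real
  assumes "r > 0" "alpha \<ge> 0" "P \<ge> 0" "r * 2^j \<le> d"
  shows "P / d powr alpha \<le> P / r powr alpha * (1 / 2 powr alpha) ^ j"
proof -
  have "d > 0" using assms by (smt (verit) zero_less_power mult_pos_pos)
  have "r powr alpha * (2 powr alpha) ^ j = (r * 2^j) powr alpha"
    using assms by (simp add: powr_mult powr_powr mult.commute flip: powr_realpow)
  also have "\<dots> \<le> d powr alpha" using assms by (intro powr_mono2) auto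
  finally have "P / d powr alpha \<le> P / (r powr alpha * (2 powr alpha) ^ j)"
    using assms \<open>d > 0\<close> by (intro divide_left_mono) auto
  then show ?thesis by (simp add: power_one_over)
qed

lemma geometric_sum_le:
  fixes z :: real
  assumes "0 \<le> z" "z < 1"
  shows "(\<Sum>k<M. z^k) \<le> 1 / (1 - z)"
proof -
  have "(\<Sum>k<M. z^k) = (1 - z^M) / (1 - z)" using assms by (simp add: sum_gp_strict)
  also have "\<dots> \<le> 1 / (1 - z)" using assms by (intro divide_right_mono) auto
  finally show ?thesis .
qed

lemma dyadic_series_constant_lt:
  fixes t :: real
  assumes t: "t > 0"
  shows "12 / (1 - 2 powr -t) + 24 / (1 - 2 powr -t / 2) < 36 * (t + 1) / t"
proof -
  define y where "y = 2 powr -t"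
  define u where "u = t * ln 2"
  have u: "u \<ge> 2*t/3" unfolding u_def using ln2_ge_two_thirds t by (simp add: mult_left_mono)
  have "2 powr t = exp u" unfolding u_def powr_def by (simp add: mult.commute)
  then have "2 powr t \<ge> 1 + u" using exp_ge_add_one_self by simp
  then have y_u: "y * (1 + u) \<le> 1" unfolding y_def by (simp add: powr_minus field_simps)
  have "y > 0" unfolding y_def by simp
  moreover have "y * u > 0" using \<open>y > 0\<close> u t by simp
  ultimately have "y < 1" using y_u by (simp add: distrib_left)
  have "12 / (1 - y) + 24 / (1 - y/2) = 36 + 12 * y / (1 - y) + 12 * y / (1 - y/2)"
    using \<open>y < 1\<close> by (simp add: field_simps)
  also have "\<dots> < 36 + 24 * (y / (1 - y))"
    using \<open>y < 1\<close> \<open>y > 0\<close> divide_strict_left_mono[of "1 - y" "1 - y/2" "12 * y"] by simp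
  also have "y / (1 - y) \<le> 1 / u" using y_u \<open>y < 1\<close> u t by (simp add: field_simps)
  also have "1 / u \<le> 3 / (2 * t)" using u t by (simp add: field_simps)
  also have "36 + 24 * (3 / (2 * t)) = 36 * (t + 1) / t" using t by (simp add: field_simps)
  finally show ?thesis unfolding y_def by simp
qed

lemma dyadic_shell_series_lt:
  fixes alpha :: real
  assumes "alpha > 2"
  shows "(\<Sum>j<M. (12 * 4^j + 24 * 2^j) * (1 / 2 powr alpha) ^ j) < 36 * (alpha - 1) / (alpha - 2)"
proof -
  define q where "q = 1 / 2 powr alpha"
  define y where "y = 2 powr -(alpha - 2)"
  have q4: "4 * q = y" and q2: "2 * q = y / 2"
    unfolding q_def y_def by (simp_all add: powr_diff powr_minus)
  have "y < 1" unfolding y_def using assms by (simp add: powr_less_one)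
  have "(\<Sum>j<M. (12 * 4^j + 24 * 2^j) * q ^ j) = (\<Sum>j<M. 12 * (4 * q) ^ j + 24 * (2 * q) ^ j)"
    by (simp add: power_mult_distrib algebra_simps)
  also have "\<dots> = 12 * (\<Sum>j<M. y ^ j) + 24 * (\<Sum>j<M. (y / 2) ^ j)"
    by (simp add: sum.distrib sum_distrib_left q4 q2)
  also have "\<dots> \<le> 12 / (1 - y) + 24 / (1 - y / 2)"
    using geometric_sum_le[of y M] geometric_sum_le[of "y/2" M] \<open>y < 1\<close>
    unfolding y_def by simp
  also have "\<dots> < 36 * ((alpha - 2) + 1) / (alpha - 2)"
    unfolding y_def using assms by (intro dyadic_series_constant_lt) simp
  finally show ?thesis unfolding q_def by (simp add: algebra_simps)
qed

lemma sum_comp_le_by_fibre_card: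
  fixes g B :: "nat \<Rightarrow> real"
  assumes "finite A" "f ` A \<subseteq> {..<M}" "\<And>j. g j \<ge> 0" "\<And>j. B j \<ge> 0"
    and "\<And>j. real (card {x\<in>A. f x = j}) \<le> B j"
  shows "(\<Sum>x\<in>A. g (f x)) \<le> (\<Sum>j<M. B j * g j)"
proof -
  have "(\<Sum>x\<in>A. g (f x)) = (\<Sum>j\<in>f ` A. \<Sum>x\<in>{x\<in>A. f x = j}. g (f x))"
    using \<open>finite A\<close> by (rule sum.image_gen)
  also have "\<dots> = (\<Sum>j\<in>f ` A. real (card {x\<in>A. f x = j}) * g j)"
    by (intro sum.cong refl) simp
  also have "\<dots> \<le> (\<Sum>j\<in>f ` A. B j * g j)"
    using assms by (intro sum_mono mult_right_mono) auto
  also have "\<dots> \<le> (\<Sum>j<M. B j * g j)"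
    using assms by (intro sum_mono2) auto
  finally show ?thesis .
qed

theorem mainTheorem1:
  fixes alpha P N rho1 rho2 :: real and V' :: "(real^2) set" and v :: "real^2"
  assumes "alpha > 2" and "P > 0" and "N \<ge> 0"
    and "finite V'" and "v \<notin> V'"
    and "\<forall>u\<in>V'. \<forall>w\<in>V'. u \<noteq> w \<longrightarrow> dist u w \<ge> rho1"
    and "\<forall>u\<in>V'. dist u v \<ge> rho2"
    and "rho2 > rho1 / 2" and "rho1 / 2 > 0"
  shows "SP P alpha N V' v
           < 36 * (alpha - 1) / (alpha - 2) * (rho2^2 / rho1^2) * (P / rho2 powr alpha) + N"
proof -
  define k where "k u = dyadic_shell rho2 (dist u v)" for u
  define q where "q = 1 / 2 powr alpha"
  define c where "c = P / rho2 powr alpha"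
  obtain M where M: "k ` V' \<subseteq> {..<M}"
    using \<open>finite V'\<close> by (metis finite_imageI finite_nat_iff_bounded)
  have "rho2 > 0" and "c \<ge> 0" using assms by (simp_all add: c_def)
  have "P / dist u v powr alpha \<le> c * q ^ k u" if "u \<in> V'" for u
    using assms that dyadic_shell_bounds[OF \<open>rho2 > 0\<close>, of "dist u v"] unfolding c_def q_def k_def
    by (intro path_loss_le_dyadic) auto
  then have "(\<Sum>u\<in>V'. P / dist u v powr alpha) \<le> (\<Sum>u\<in>V'. c * q ^ k u)"
    by (rule sum_mono)
  also have "\<dots> \<le> (\<Sum>j<M. (12 * 4^j + 24 * 2^j) * (rho2 / rho1)^2 * (c * q ^ j))"
    using M assms \<open>c \<ge> 0\<close> card_dyadic_shell_le[of V' rho1 rho2 v]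
    by (intro sum_comp_le_by_fibre_card[where g="\<lambda>j. c * q ^ j"]) (auto simp: k_def q_def)
  also have "\<dots> = (rho2 / rho1)^2 * c * (\<Sum>j<M. (12 * 4^j + 24 * 2^j) * q ^ j)"
    by (simp add: sum_distrib_left mult_ac)
  also have "\<dots> < (rho2 / rho1)^2 * c * (36 * (alpha - 1) / (alpha - 2))"
    using assms dyadic_shell_series_lt[of alpha M] unfolding q_def c_def
    by (intro mult_strict_left_mono) auto
  finally show ?thesis
    unfolding SP_def c_def by (simp add: power_divide mult_ac)
qed

end
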